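(* Let $\Gamma$ be a distance-regular graph with diameter $D\ge3$ and $a_1\ne0$. Let $\sigma_0,\dots,\sigma_D$ be a nontrivial pseudo cosine sequence which is tight, with auxiliary parameter $\varepsilon$, and write $\sigma=\sigma_1$. Then (i) $\sigma_2\ne1$; (ii) $\varepsilon\sigma\ne1$; (iii) $\sigma_2\ne\varepsilon\sigma$; (iv) $\sigma_2\ne\sigma^2$.
   Context: $\Gamma$ is a finite connected undirected graph without loops or multiple edges, distance-regular with diameter $D$, intersection numbers $a_i,b_i,c_i$ ($c_0=0$, $b_D=0$), valency $k$, $c_i+a_i+b_i=k$. For $\theta\in\mathbb{R}$ the pseudo cosine sequence for $\theta$ is the sequence of reals $\sigma_0,\dots,\sigma_D$ with $\sigma_0=1$ and $c_i\sigma_{i-1}+a_i\sigma_i+b_i\sigma_{i+1}=\theta\sigma_i$ for $0\le i\le D-1$; nontrivial means $\sigma_1\ne1$. Pseudo cosine sequences $\sigma_i$, $\rho_i$ form a tight pair if $(\sigma_i\rho_i)_{i=0}^D$ is a pseudo cosine sequence. For a tight pair of nontrivial pseudo cosine sequences, an auxiliary parameter is a real $\varepsilon$ with $\sigma_i\rho_i-\sigma_{i-1}\rho_{i-1}=\varepsilon(\sigma_{i-1}\rho_i-\sigma_i\rho_{i-1})$ for $1\le i\le D$. When $a_1\ne0$, a nontrivial pseudo cosine sequence $\sigma_0,\dots,\sigma_D$ is tight if some nontrivial pseudo cosine sequence $\rho_0,\dots,\rho_D$ forms a tight pair with it; its auxiliary parameter is the (uniquely determined) auxiliary parameter of that pair.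 *)

theory Defs
  imports Main "HOL.Real"
begin

definition simple_graph :: "'a set \<Rightarrow> ('a \<Rightarrow> 'a \<Rightarrow> bool) \<Rightarrow> bool" where
  "simple_graph V E \<longleftrightarrow> finite V \<and> V \<noteq> {} \<and>
     (\<forall>x y. E x y \<longrightarrow> x \<in> V \<and> y \<in> V \<and> x \<noteq> y \<and> E y x)"

definition adj_rel :: "'a set \<Rightarrow> ('a \<Rightarrow> 'a \<Rightarrow> bool) \<Rightarrow> ('a \<times> 'a) set" where
  "adj_rel V E = {(x, y). x \<in> V \<and> y \<in> V \<and> E x y}"

definition graph_connected :: "'a set \<Rightarrow> ('a \<Rightarrow> 'a \<Rightarrow> bool) \<Rightarrow> bool" where
  "graph_connected V E \<longleftrightarrow> (\<forall>x\<in>V. \<forall>y\<in>V. (x, y) \<in> (adj_rel V E)\<^sup>*)"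

definition gdist :: "'a set \<Rightarrow> ('a \<Rightarrow> 'a \<Rightarrow> bool) \<Rightarrow> 'a \<Rightarrow> 'a \<Rightarrow> nat" where
  "gdist V E x y = (LEAST n. (x, y) \<in> (adj_rel V E) ^^ n)"

definition diameter :: "'a set \<Rightarrow> ('a \<Rightarrow> 'a \<Rightarrow> bool) \<Rightarrow> nat" where
  "diameter V E = Max {gdist V E x y | x y. x \<in> V \<and> y \<in> V}"

text \<open>Distance-regular graph with diameter D and intersection numbers a i, b i, c i:
  for all vertices x, y at distance i (i \<le> D), the numbers of neighbours z of y at
  distance i-1, i, i+1 from x are c i, a i, b i respectively.  (For i = 0 the
  c-condition forces c 0 = 0; for i = D the b-condition forces b D = 0.)\<close>
definition distance_regular ::
  "'a set \<Rightarrow> ('a \<Rightarrow> 'a \<Rightarrow> bool) \<Rightarrow> nat \<Rightarrow> (nat \<Rightarrow> nat) \<Rightarrow> (nat \<Rightarrow> nat) \<Rightarrow> (nat \<Rightarrow> nat) \<Rightarrow> bool" where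
  "distance_regular V E D a b c \<longleftrightarrow>
     simple_graph V E \<and> graph_connected V E \<and> diameter V E = D \<and>
     (\<forall>i\<le>D. \<forall>x\<in>V. \<forall>y\<in>V. gdist V E x y = i \<longrightarrow>
        card {z\<in>V. E y z \<and> gdist V E x z + 1 = i} = c i \<and>
        card {z\<in>V. E y z \<and> gdist V E x z = i} = a i \<and>
        card {z\<in>V. E y z \<and> gdist V E x z = i + 1} = b i)"

definition pseudo_cosine_for ::
  "nat \<Rightarrow> (nat \<Rightarrow> nat) \<Rightarrow> (nat \<Rightarrow> nat) \<Rightarrow> (nat \<Rightarrow> nat) \<Rightarrow> real \<Rightarrow> (nat \<Rightarrow> real) \<Rightarrow> bool" where
  "pseudo_cosine_for D a b c \<theta> \<sigma> \<longleftrightarrow>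
     \<sigma> 0 = 1 \<and>
     (\<forall>i<D. real (c i) * \<sigma> (i - 1) + real (a i) * \<sigma> i + real (b i) * \<sigma> (i + 1) = \<theta> * \<sigma> i)"

definition pseudo_cosine ::
  "nat \<Rightarrow> (nat \<Rightarrow> nat) \<Rightarrow> (nat \<Rightarrow> nat) \<Rightarrow> (nat \<Rightarrow> nat) \<Rightarrow> (nat \<Rightarrow> real) \<Rightarrow> bool" where
  "pseudo_cosine D a b c \<sigma> \<longleftrightarrow> (\<exists>\<theta>. pseudo_cosine_for D a b c \<theta> \<sigma>)"

definition nontrivial_pcs :: "(nat \<Rightarrow> real) \<Rightarrow> bool" where
  "nontrivial_pcs \<sigma> \<longleftrightarrow> \<sigma> 1 \<noteq> 1"

definition tight_pair ::
  "nat \<Rightarrow> (nat \<Rightarrow> nat) \<Rightarrow> (nat \<Rightarrow> nat) \<Rightarrow> (nat \<Rightarrow> nat) \<Rightarrow> (nat \<Rightarrow> real) \<Rightarrow> (nat \<Rightarrow> real) \<Rightarrow> bool" where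
  "tight_pair D a b c \<sigma> \<rho> \<longleftrightarrow>
     pseudo_cosine D a b c \<sigma> \<and> pseudo_cosine D a b c \<rho> \<and>
     pseudo_cosine D a b c (\<lambda>i. \<sigma> i * \<rho> i)"

definition auxiliary_parameter ::
  "nat \<Rightarrow> (nat \<Rightarrow> real) \<Rightarrow> (nat \<Rightarrow> real) \<Rightarrow> real \<Rightarrow> bool" where
  "auxiliary_parameter D \<sigma> \<rho> \<epsilon> \<longleftrightarrow>
     (\<forall>i\<in>{1..D}. \<sigma> i * \<rho> i - \<sigma> (i - 1) * \<rho> (i - 1)
                  = \<epsilon> * (\<sigma> (i - 1) * \<rho> i - \<sigma> i * \<rho> (i - 1)))"

definition tight_with_aux ::
  "nat \<Rightarrow> (nat \<Rightarrow> nat) \<Rightarrow> (nat \<Rightarrow> nat) \<Rightarrow> (nat \<Rightarrow> nat) \<Rightarrow> (nat \<Rightarrow> real) \<Rightarrow> real \<Rightarrow> bool" where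
  "tight_with_aux D a b c \<sigma> \<epsilon> \<longleftrightarrow>
     pseudo_cosine D a b c \<sigma> \<and> nontrivial_pcs \<sigma> \<and>
     (\<exists>\<rho>. pseudo_cosine D a b c \<rho> \<and> nontrivial_pcs \<rho> \<and>
          tight_pair D a b c \<sigma> \<rho> \<and> auxiliary_parameter D \<sigma> \<rho> \<epsilon>)"

end

theory Submission
  imports Defs
begin

text \<open>Only the first few terms matter.  Because \<open>a\<^sub>0 = c\<^sub>0 = 0\<close> and \<open>c\<^sub>1 = 1\<close>, the
  recurrence at \<open>i = 0\<close> forces \<open>\<theta> = k \<sigma>\<^sub>1\<close>, and at \<open>i = 1, 2\<close> it ties \<open>\<sigma>\<^sub>1, \<sigma>\<^sub>2, \<sigma>\<^sub>3\<close>
  together; likewise for the partner \<open>\<rho>\<close> and for the product \<open>\<sigma>\<rho>\<close>.  With the defining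
  relation of \<open>\<epsilon>\<close> at \<open>i = 1, 2, 3\<close> this is a polynomial system in which each of the four
  forbidden equalities forces so much (\<open>\<rho>\<^sub>1 = 0\<close> in (i), \<open>\<sigma>\<^sub>1 = \<epsilon> = -1\<close> in (ii), ...) that
  the remaining equations contradict the positivity of \<open>a\<^sub>1, b\<^sub>1, a\<^sub>2, b\<^sub>2, c\<^sub>2\<close>.  The graph
  enters only through these positivity facts, \<open>a\<^sub>2 > 0\<close> coming from \<open>a\<^sub>1 > 0\<close> and \<open>D \<ge> 3\<close>.
  The system is invariant under exchanging \<open>\<sigma>\<close> and \<open>\<rho>\<close> while negating \<open>\<epsilon>\<close>, which lets
  (ii) and (iii) share their final contradiction.\<close>

lemma relpow_sym:
  assumes "sym R" and "(x, y) \<in> R ^^ n"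
  shows "(y, x) \<in> R ^^ n"
  using assms(2)
proof (induction n arbitrary: y)
  case 0
  then show ?case by simp
next
  case (Suc n)
  from Suc.prems obtain z where "(x, z) \<in> R ^^ n" and "(z, y) \<in> R"
    by (rule relpow_Suc_E)
  with Suc.IH assms(1) show ?case
    by (metis relpow_Suc_I2 symD)
qed

locale connected_graph =
  fixes V :: "'v set" and E :: "'v \<Rightarrow> 'v \<Rightarrow> bool"
  assumes simple: "simple_graph V E" and connected: "graph_connected V E"
begin

abbreviation d :: "'v \<Rightarrow> 'v \<Rightarrow> nat" where
  "d \<equiv> gdist V E"

lemma finite_V: "finite V"
  using simple unfolding simple_graph_def by blast

lemma edgeD:
  assumes "E x y"
  shows "x \<in> V" and "y \<in> V" and "x \<noteq> y" and "E y x"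
  using assms simple unfolding simple_graph_def by blast+

lemma gdist_path:
  assumes "x \<in> V" and "y \<in> V"
  shows "(x, y) \<in> adj_rel V E ^^ d x y"
proof -
  have "(x, y) \<in> (adj_rel V E)\<^sup>*"
    using assms connected unfolding graph_connected_def by blast
  then obtain n where "(x, y) \<in> adj_rel V E ^^ n"
    using rtrancl_imp_relpow by blast
  then show ?thesis
    unfolding gdist_def by (rule LeastI)
qed

lemma gdist_le: "(x, y) \<in> adj_rel V E ^^ n \<Longrightarrow> d x y \<le> n"
  unfolding gdist_def by (rule Least_le)

lemma gdist_self [simp]: "d x x = 0"
  using gdist_le[of x x 0] by simp

lemma gdist_eq_0_iff:
  assumes "x \<in> V" and "y \<in> V"
  shows "d x y = 0 \<longleftrightarrow> x = y"
  using gdist_path[OF assms] by auto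

lemma gdist_eq_1_iff:
  assumes "x \<in> V" and "y \<in> V"
  shows "d x y = 1 \<longleftrightarrow> E x y"
proof
  assume "d x y = 1"
  then show "E x y"
    using gdist_path[OF assms] unfolding adj_rel_def by simp
next
  assume "E x y"
  then have "d x y \<le> 1" and "x \<noteq> y"
    using gdist_le[of x y 1] edgeD assms unfolding adj_rel_def by auto
  then show "d x y = 1"
    using gdist_eq_0_iff[OF assms] by simp
qed

lemma gdist_edge: "E x y \<Longrightarrow> d x y = 1"
  using gdist_eq_1_iff[OF edgeD(1,2)] by blast

lemma gdist_triangle:
  assumes "x \<in> V" and "y \<in> V" and "z \<in> V"
  shows "d x z \<le> d x y + d y z"
proof -
  have "(x, z) \<in> adj_rel V E ^^ (d x y + d y z)"
    using relpow_trans[OF gdist_path[OF assms(1,2)] gdist_path[OF assms(2,3)]] .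
  then show ?thesis
    by (rule gdist_le)
qed

lemma gdist_sym:
  assumes "x \<in> V" and "y \<in> V"
  shows "d x y = d y x"
proof -
  have sym: "sym (adj_rel V E)"
    using edgeD unfolding adj_rel_def sym_def by blast
  have "(y, x) \<in> adj_rel V E ^^ d x y" and "(x, y) \<in> adj_rel V E ^^ d y x"
    using relpow_sym[OF sym gdist_path[OF assms]] relpow_sym[OF sym gdist_path[OF assms(2,1)]] .
  then have "d y x \<le> d x y" and "d x y \<le> d y x"
    by (simp_all add: gdist_le)
  then show ?thesis
    by simp
qed

lemma gdist_Suc_predecessor:
  assumes "x \<in> V" and "y \<in> V" and "d x y = Suc n"
  obtains z where "z \<in> V" and "E z y" and "d x z = n"
proof -
  have "(x, y) \<in> adj_rel V E ^^ Suc n"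
    using gdist_path[OF assms(1,2)] assms(3) by simp
  then obtain z where xz: "(x, z) \<in> adj_rel V E ^^ n" and zy: "(z, y) \<in> adj_rel V E"
    by (rule relpow_Suc_E)
  then have "z \<in> V" and "E z y"
    unfolding adj_rel_def by auto
  moreover have "d x z = n"
    using gdist_le[OF xz] gdist_triangle[OF assms(1) \<open>z \<in> V\<close> assms(2)]
      gdist_edge[OF \<open>E z y\<close>] assms(3) by simp
  ultimately show ?thesis
    using that by blast
qed

lemma gdist_intermediate:
  assumes "x \<in> V" and "y \<in> V" and "j \<le> d x y"
  shows "\<exists>z\<in>V. d x z = j"
  using assms(2,3)
proof (induction "d x y" arbitrary: y)
  case 0
  then show ?case by auto
next
  case (Suc n)
  show ?case
  proof (cases "j = Suc n")
    case True
    then show ?thesis using Suc.hyps(2) Suc.prems(1) by auto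
  next
    case False
    obtain z where "z \<in> V" and "d x z = n"
      using gdist_Suc_predecessor[OF assms(1) Suc.prems(1) Suc.hyps(2)[symmetric]] by blast
    then show ?thesis
      using Suc False by auto
  qed
qed

lemma diameter_attained: "\<exists>x\<in>V. \<exists>y\<in>V. d x y = diameter V E"
proof -
  let ?S = "{d x y | x y. x \<in> V \<and> y \<in> V}"
  have "?S = (\<lambda>(x, y). d x y) ` (V \<times> V)"
    by auto
  then have "finite ?S"
    using finite_V by simp
  moreover have "?S \<noteq> {}"
    using simple unfolding simple_graph_def by blast
  ultimately have "Max ?S \<in> ?S"
    by (rule Max_in)
  then obtain x y where "x \<in> V" and "y \<in> V" and "d x y = Max ?S"
    by auto
  then show ?thesis
    unfolding diameter_def by blast
qed

lemma card_neighbours_by_distance: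
  assumes "x \<in> V" and "y \<in> V" and "d x y = i"
  shows "card {z\<in>V. E y z} = card {z\<in>V. E y z \<and> d x z + 1 = i}
    + card {z\<in>V. E y z \<and> d x z = i} + card {z\<in>V. E y z \<and> d x z = i + 1}"
proof -
  have "{z\<in>V. E y z} = {z\<in>V. E y z \<and> d x z + 1 = i}
      \<union> {z\<in>V. E y z \<and> d x z = i} \<union> {z\<in>V. E y z \<and> d x z = i + 1}"
  proof (intro equalityI subsetI)
    fix z
    assume "z \<in> {z\<in>V. E y z}"
    then have "z \<in> V" and "E y z" and "d y z = 1" and "d z y = 1"
      using gdist_edge edgeD by auto
    moreover have "d x z \<le> d x y + d y z" and "d x y \<le> d x z + d z y"
      using gdist_triangle assms(1,2) \<open>z \<in> V\<close> by blast+
    ultimately show "z \<in> {z\<in>V. E y z \<and> d x z + 1 = i}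
      \<union> {z\<in>V. E y z \<and> d x z = i} \<union> {z\<in>V. E y z \<and> d x z = i + 1}"
      using assms(3) by auto
  qed auto
  then show ?thesis
    using finite_V by (simp add: card_Un_disjoint disjoint_iff)
qed

end

locale distance_regular_graph =
  fixes V :: "'v set" and E :: "'v \<Rightarrow> 'v \<Rightarrow> bool"
    and D :: nat and a b c :: "nat \<Rightarrow> nat"
  assumes distance_regular: "distance_regular V E D a b c"

sublocale distance_regular_graph \<subseteq> connected_graph
  using distance_regular unfolding distance_regular_def by unfold_locales blast+

context distance_regular_graph
begin

lemma diameter_eq: "diameter V E = D"
  using distance_regular unfolding distance_regular_def by blast

lemma
  assumes "i \<le> D" and "x \<in> V" and "y \<in> V" and "d x y = i"
  shows card_c: "card {z\<in>V. E y z \<and> d x z + 1 = i} = c i"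
    and card_a: "card {z\<in>V. E y z \<and> d x z = i} = a i"
    and card_b: "card {z\<in>V. E y z \<and> d x z = i + 1} = b i"
  using assms distance_regular unfolding distance_regular_def by blast+

lemma distance_realized:
  assumes "i \<le> D"
  obtains x y where "x \<in> V" and "y \<in> V" and "d x y = i"
proof -
  obtain x y where "x \<in> V" and "y \<in> V" and "d x y = D"
    using diameter_attained diameter_eq by blast
  then obtain z where "z \<in> V" and "d x z = i"
    using gdist_intermediate assms by blast
  then show ?thesis
    using that \<open>x \<in> V\<close> by blast
qed

lemma card_neighbours_pos:
  assumes "E y z" and "P z"
  shows "0 < card {w\<in>V. E y w \<and> P w}"
  using assms edgeD(2)[OF assms(1)] finite_V by (auto simp: card_gt_0_iff)

lemma
  assumes "i \<le> D" and "x \<in> V" and "y \<in> V" and "d x y = i" and "E y z"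
  shows a_pos_of_neighbour: "d x z = i \<Longrightarrow> 0 < a i"
    and b_pos_of_neighbour: "d x z = i + 1 \<Longrightarrow> 0 < b i"
proof -
  show "d x z = i \<Longrightarrow> 0 < a i"
    using card_a[OF assms(1-4)] card_neighbours_pos[of y z "\<lambda>w. d x w = i"] assms(5) by simp
  show "d x z = i + 1 \<Longrightarrow> 0 < b i"
    using card_b[OF assms(1-4)] card_neighbours_pos[of y z "\<lambda>w. d x w = i + 1"] assms(5) by simp
qed

lemma degree: "y \<in> V \<Longrightarrow> card {z\<in>V. E y z} = b 0"
  using card_b[of 0 y y] gdist_edge by (simp cong: conj_cong)

lemma c0: "c 0 = 0"
proof -
  obtain x y where "x \<in> V" and "y \<in> V" and "d x y = 0"
    using distance_realized[of 0] by blast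
  then show ?thesis
    using card_c[of 0 x y] by simp
qed

lemma a0: "a 0 = 0"
proof -
  obtain y where y: "y \<in> V"
    using distance_realized[of 0] by blast
  have "{z\<in>V. E y z \<and> d y z = 0} = {}"
    using gdist_eq_0_iff edgeD by blast
  then have "card {z\<in>V. E y z \<and> d y z = 0} = 0"
    by (simp only: card.empty)
  then show ?thesis
    using card_a[OF le0 y y gdist_self] by linarith
qed

lemma c1:
  assumes "1 \<le> D"
  shows "c 1 = 1"
proof -
  obtain x y where "x \<in> V" and "y \<in> V" and "d x y = 1"
    using distance_realized assms by blast
  moreover from this have "{z\<in>V. E y z \<and> d x z + 1 = 1} = {x}"
    using gdist_eq_0_iff gdist_eq_1_iff edgeD by auto
  ultimately show ?thesis
    using card_c[of 1 x y] assms by simp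
qed

lemma valency:
  assumes "i \<le> D"
  shows "b 0 = c i + a i + b i"
proof -
  obtain x y where x: "x \<in> V" and y: "y \<in> V" and xy: "d x y = i"
    using distance_realized assms by blast
  show ?thesis
    using card_neighbours_by_distance[OF x y xy] degree[OF y]
      card_c[OF assms x y xy] card_a[OF assms x y xy] card_b[OF assms x y xy] by simp
qed

lemma b_pos:
  assumes "i < D"
  shows "0 < b i"
proof -
  obtain x y where x: "x \<in> V" and "y \<in> V" and xy: "d x y = Suc i"
    using distance_realized[of "Suc i"] assms by auto
  then obtain z where "z \<in> V" and "E z y" and "d x z = i"
    using gdist_Suc_predecessor by blast
  then show ?thesis
    using b_pos_of_neighbour[of i x z y] assms x xy by simp
qed

lemma a2_pos:
  assumes "3 \<le> D" and "0 < a 1"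
  shows "0 < a 2"
proof -
  txt \<open>On a geodesic \<open>p z\<^sub>1 z\<^sub>2 z\<^sub>3\<close>, a common neighbour \<open>v\<close> of \<open>z\<^sub>1\<close> and \<open>z\<^sub>2\<close> is at
    distance 2 either from \<open>p\<close> (and next to \<open>z\<^sub>2\<close>) or from \<open>z\<^sub>3\<close> (and next to \<open>z\<^sub>1\<close>).\<close>
  obtain p z3 where p: "p \<in> V" and z3: "z3 \<in> V" and pz3: "d p z3 = 3"
    using distance_realized assms(1) by blast
  obtain z2 where z2: "z2 \<in> V" and "E z2 z3" and pz2: "d p z2 = 2"
    using gdist_Suc_predecessor[OF p z3, of 2] pz3 by auto
  obtain z1 where z1: "z1 \<in> V" and "E z1 z2" and pz1: "d p z1 = 1"
    using gdist_Suc_predecessor[OF p z2, of 1] pz2 by auto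
  have z2z1: "d z2 z1 = 1" and z3z2: "d z3 z2 = 1"
    using gdist_edge edgeD(4) \<open>E z1 z2\<close> \<open>E z2 z3\<close> by blast+
  have "0 < card {w\<in>V. E z1 w \<and> d z2 w = 1}"
    using card_a[of 1 z2 z1] z1 z2 z2z1 assms by simp
  then obtain v where v: "v \<in> V" and "E z1 v" and z2v: "d z2 v = 1"
    by (auto simp: card_gt_0_iff)
  have "d p v \<le> d p z1 + d z1 v"
    using gdist_triangle p z1 v by blast
  then have pv: "d p v \<le> 2"
    using pz1 gdist_edge[OF \<open>E z1 v\<close>] by simp
  show ?thesis
  proof (cases "d p v = 2")
    case True
    then show ?thesis
      using a_pos_of_neighbour[OF _ p z2 pz2] gdist_eq_1_iff z2 v z2v assms(1) by simp
  next
    case False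
    have "d p z3 \<le> d p v + d v z3" and "d v z3 = d z3 v" and "d z3 v \<le> d z3 z2 + d z2 v"
      using gdist_triangle gdist_sym p z2 z3 v by blast+
    then have z3v: "d z3 v = 2"
      using False pv pz3 z3z2 z2v by simp
    have "d p z3 \<le> d p z1 + d z1 z3" and "d z1 z3 = d z3 z1" and "d z3 z1 \<le> d z3 z2 + d z2 z1"
      using gdist_triangle gdist_sym p z1 z2 z3 by blast+
    then have z3z1: "d z3 z1 = 2"
      using pz1 pz3 z3z2 z2z1 by simp
    show ?thesis
      using a_pos_of_neighbour[OF _ z3 z1 z3z1 \<open>E z1 v\<close>] z3v assms(1) by simp
  qed
qed

end

lemma tight_pair_commute:
  "tight_pair D a b c \<sigma> \<rho> \<longleftrightarrow> tight_pair D a b c \<rho> \<sigma>"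
  unfolding tight_pair_def by (auto simp: mult.commute)

lemma auxiliary_parameter_commute:
  "auxiliary_parameter D \<sigma> \<rho> \<epsilon> \<longleftrightarrow> auxiliary_parameter D \<rho> \<sigma> (- \<epsilon>)"
  unfolding auxiliary_parameter_def by (auto simp: algebra_simps)

locale tight_pair_setting =
  fixes D :: nat and a b c :: "nat \<Rightarrow> nat" and \<sigma> \<rho> :: "nat \<Rightarrow> real" and \<epsilon> :: real
  assumes diameter_ge_3: "3 \<le> D"
    and c0: "c 0 = 0" and a0: "a 0 = 0" and c1: "c 1 = 1"
    and valency_1: "b 0 = c 1 + a 1 + b 1" and valency_2: "b 0 = c 2 + a 2 + b 2"
    and a1_pos: "0 < a 1" and b1_pos: "0 < b 1"
    and a2_pos: "0 < a 2" and b2_pos: "0 < b 2"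
    and tight: "tight_pair D a b c \<sigma> \<rho>" and aux: "auxiliary_parameter D \<sigma> \<rho> \<epsilon>"
    and sigma_nontrivial: "\<sigma> 1 \<noteq> 1" and rho_nontrivial: "\<rho> 1 \<noteq> 1"
begin

lemma swapped_setting: "tight_pair_setting D a b c \<rho> \<sigma> (- \<epsilon>)"
  using tight_pair_setting_axioms tight_pair_commute auxiliary_parameter_commute
  unfolding tight_pair_setting_def by blast

lemma low_recurrences:
  fixes f :: "nat \<Rightarrow> real"
  assumes "pseudo_cosine D a b c f"
  shows "1 + a 1 * f 1 + b 1 * f 2 = b 0 * (f 1)\<^sup>2"
    and "c 2 * f 1 + a 2 * f 2 + b 2 * f 3 = b 0 * f 1 * f 2"
proof -
  obtain \<theta> where f0: "f 0 = 1"
    and rec: "\<And>i. i < D \<Longrightarrow> c i * f (i - 1) + a i * f i + b i * f (i + 1) = \<theta> * f i"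
    using assms unfolding pseudo_cosine_def pseudo_cosine_for_def by blast
  have \<theta>: "\<theta> = b 0 * f 1"
    using rec[of 0] diameter_ge_3 f0 c0 a0 by simp
  show "1 + a 1 * f 1 + b 1 * f 2 = b 0 * (f 1)\<^sup>2"
    using rec[of 1] diameter_ge_3 f0 c1 \<theta>
    by (simp add: power2_eq_square numeral_2_eq_2 mult.assoc)
  show "c 2 * f 1 + a 2 * f 2 + b 2 * f 3 = b 0 * f 1 * f 2"
    using rec[of 2] diameter_ge_3 \<theta> by (simp add: numeral_3_eq_3 numeral_2_eq_2)
qed

lemma valency_real:
  "real (b 0) = 1 + real (a 1) + real (b 1)" "real (b 0) = real (c 2) + real (a 2) + real (b 2)"
  using valency_1 valency_2 c1 by simp_all

lemmas sigma_rec = low_recurrences[OF tight[unfolded tight_pair_def, THEN conjunct1]]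
lemmas rho_rec = low_recurrences[OF tight[unfolded tight_pair_def, THEN conjunct2, THEN conjunct1]]
lemmas prod_rec = low_recurrences[OF tight[unfolded tight_pair_def, THEN conjunct2, THEN conjunct2]]

lemma aux_low_terms:
  "\<sigma> 1 * \<rho> 1 - 1 = \<epsilon> * (\<rho> 1 - \<sigma> 1)"
  "\<sigma> 2 * \<rho> 2 - \<sigma> 1 * \<rho> 1 = \<epsilon> * (\<sigma> 1 * \<rho> 2 - \<sigma> 2 * \<rho> 1)"
  "\<sigma> 3 * \<rho> 3 - \<sigma> 2 * \<rho> 2 = \<epsilon> * (\<sigma> 2 * \<rho> 3 - \<sigma> 3 * \<rho> 2)"
proof -
  have step: "\<And>i. 1 \<le> i \<Longrightarrow> i \<le> 3 \<Longrightarrow> \<sigma> i * \<rho> i - \<sigma> (i - 1) * \<rho> (i - 1)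
      = \<epsilon> * (\<sigma> (i - 1) * \<rho> i - \<sigma> i * \<rho> (i - 1))"
    using aux diameter_ge_3 unfolding auxiliary_parameter_def by auto
  have "\<sigma> 0 = 1" "\<rho> 0 = 1"
    using tight unfolding tight_pair_def pseudo_cosine_def pseudo_cosine_for_def by auto
  then show "\<sigma> 1 * \<rho> 1 - 1 = \<epsilon> * (\<rho> 1 - \<sigma> 1)"
    using step[of 1] by simp
  show "\<sigma> 2 * \<rho> 2 - \<sigma> 1 * \<rho> 1 = \<epsilon> * (\<sigma> 1 * \<rho> 2 - \<sigma> 2 * \<rho> 1)"
    using step[of 2] by simp
  show "\<sigma> 3 * \<rho> 3 - \<sigma> 2 * \<rho> 2 = \<epsilon> * (\<sigma> 2 * \<rho> 3 - \<sigma> 3 * \<rho> 2)"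
    using step[of 3] by (simp add: numeral_3_eq_3 numeral_2_eq_2)
qed

lemma sigma2_ne_1: "\<sigma> 2 \<noteq> 1"
proof
  assume \<sigma>2: "\<sigma> 2 = 1"
  have "(\<sigma> 1 - 1) * (b 0 * \<sigma> 1 + b 0 - a 1) = 0"
    using sigma_rec(1) \<sigma>2 valency_real(1) by algebra
  then have \<sigma>1: "b 0 * \<sigma> 1 + b 0 = a 1"
    using sigma_nontrivial by simp
  have "(\<sigma> 1 - 1) * \<rho> 1 * a 1 * (1 - \<rho> 1) = 0"
    using rho_rec(1) prod_rec(1) \<sigma>2 \<sigma>1 by algebra
  then have \<rho>1: "\<rho> 1 = 0"
    using sigma_nontrivial rho_nontrivial a1_pos by simp
  then have \<rho>2: "\<rho> 2 \<noteq> 0"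
    using rho_rec(1) by auto
  have "b 2 * \<rho> 3 * (\<sigma> 3 - 1) = 0"
    using rho_rec(2) prod_rec(2) \<rho>1 \<sigma>2 by algebra
  then consider "\<rho> 3 = 0" | "\<sigma> 3 = 1"
    using b2_pos by force
  then show False
  proof cases
    case 1
    then show False using rho_rec(2) \<rho>1 \<rho>2 a2_pos by simp
  next
    case 2
    have "\<epsilon> * \<sigma> 1 = 1"
      using aux_low_terms(1) \<rho>1 by simp
    then have "\<epsilon> \<noteq> 1"
      using sigma_nontrivial by auto
    moreover have "(\<epsilon> - 1) * (\<rho> 3 - \<rho> 2) = 0"
      using aux_low_terms(3) \<sigma>2 2 by algebra
    ultimately have "\<rho> 3 = \<rho> 2" by simp
    then have "(a 2 + b 2) * \<rho> 2 = 0"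
      using rho_rec(2) \<rho>1 by (simp add: algebra_simps)
    then show False using \<rho>2 a2_pos by simp
  qed
qed

lemma rho1_ne_0: "\<rho> 1 \<noteq> 0"
proof
  assume \<rho>1: "\<rho> 1 = 0"
  have "b 1 * \<rho> 2 * (\<sigma> 2 - 1) = 0"
    using rho_rec(1) prod_rec(1) \<rho>1 by algebra
  moreover have "\<rho> 2 \<noteq> 0"
    using rho_rec(1) \<rho>1 by auto
  ultimately show False
    using sigma2_ne_1 b1_pos by simp
qed

text \<open>The configuration in which both (ii) and (iii) end; (iii) reaches it only after
  exchanging \<open>\<sigma>\<close> and \<open>\<rho>\<close>.\<close>

lemma rho2_ne_rho1:
  assumes \<sigma>1: "\<sigma> 1 = -1" and \<epsilon>: "\<epsilon> = -1"
  shows "\<rho> 2 \<noteq> \<rho> 1"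
proof
  assume \<rho>2: "\<rho> 2 = \<rho> 1"
  have "b 1 * (\<sigma> 2 - 1) = 2 * real (a 1)"
    using sigma_rec(1) \<sigma>1 valency_real(1) by algebra
  then have "0 < b 1 * (\<sigma> 2 - 1)"
    using a1_pos by simp
  then have \<sigma>2: "\<sigma> 2 > 1"
    using b1_pos by (simp add: zero_less_mult_iff)
  have "(\<rho> 1 - 1) * (b 0 * \<rho> 1 + 1) = 0"
    using rho_rec(1) \<rho>2 valency_real(1) by algebra
  then have \<rho>1: "b 0 * \<rho> 1 = -1"
    using rho_nontrivial by algebra
  then have "real (b 0) * \<rho> 1 < 0"
    by simp
  then have \<rho>1_neg: "\<rho> 1 < 0"
    by (simp add: mult_less_0_iff)
  have "b 2 * \<rho> 3 = - \<rho> 1 * (1 + real (c 2) + real (a 2))"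
    using rho_rec(2) \<rho>2 \<rho>1 by algebra
  moreover have "0 < - \<rho> 1 * (1 + real (c 2) + real (a 2))"
    using \<rho>1_neg by (intro mult_pos_pos) auto
  ultimately have "0 < b 2 * \<rho> 3"
    by linarith
  then have "\<rho> 3 > 0"
    using b2_pos by (simp add: zero_less_mult_iff)
  moreover have "(\<sigma> 3 + \<sigma> 2) * (\<rho> 3 - \<rho> 1) = 0"
    using aux_low_terms(3) \<epsilon> \<rho>2 by algebra
  ultimately have \<sigma>3: "\<sigma> 3 = - \<sigma> 2"
    using \<rho>1_neg by simp
  have "\<sigma> 2 * (2 * real (a 2) + real (c 2)) = c 2"
    using sigma_rec(2) \<sigma>1 \<sigma>3 valency_real(2) by algebra
  moreover have "\<sigma> 2 * (2 * real (a 2) + real (c 2)) > 2 * a 2 + c 2"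
    using \<sigma>2 a2_pos by simp
  ultimately show False
    using a2_pos by simp
qed

lemma aux_sigma1_ne_1: "\<epsilon> * \<sigma> 1 \<noteq> 1"
proof
  assume \<epsilon>\<sigma>1: "\<epsilon> * \<sigma> 1 = 1"
  have "\<rho> 1 * (\<sigma> 1 - \<epsilon>) = 0"
    using aux_low_terms(1) \<epsilon>\<sigma>1 by algebra
  then have "\<sigma> 1 = \<epsilon>"
    using rho1_ne_0 by simp
  then have "\<sigma> 1 * \<sigma> 1 = 1"
    using \<epsilon>\<sigma>1 by simp
  then have \<sigma>1: "\<sigma> 1 = -1" and \<epsilon>: "\<epsilon> = -1"
    using sigma_nontrivial \<open>\<sigma> 1 = \<epsilon>\<close> square_eq_1_iff by auto
  have "(\<sigma> 2 - 1) * (\<rho> 2 - \<rho> 1) = 0"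
    using aux_low_terms(2) \<sigma>1 \<epsilon> by algebra
  then have "\<rho> 2 = \<rho> 1"
    using sigma2_ne_1 by simp
  with rho2_ne_rho1 \<sigma>1 \<epsilon> show False by blast
qed

lemma sigma2_ne_aux_sigma1: "\<sigma> 2 \<noteq> \<epsilon> * \<sigma> 1"
proof
  assume \<sigma>2: "\<sigma> 2 = \<epsilon> * \<sigma> 1"
  interpret swapped: tight_pair_setting D a b c \<rho> \<sigma> "- \<epsilon>"
    by (rule swapped_setting)
  have "\<rho> 1 * \<sigma> 1 * (1 - \<epsilon>) * (1 + \<epsilon>) = 0"
    using aux_low_terms(2) \<sigma>2 by algebra
  then consider "\<epsilon> = 1" | "\<epsilon> = -1"
    using rho1_ne_0 swapped.rho1_ne_0 by force
  then show False
  proof cases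
    case 1
    then have "(\<sigma> 1 - 1) * (\<rho> 1 + 1) = 0"
      using aux_low_terms(1) by algebra
    then have "\<rho> 1 = -1"
      using sigma_nontrivial by simp
    then show False
      using swapped.rho2_ne_rho1 \<sigma>2 1 by simp
  next
    case 2
    then have "(\<sigma> 1 + 1) * (\<rho> 1 - 1) = 0"
      using aux_low_terms(1) by algebra
    then have "\<sigma> 1 = -1"
      using rho_nontrivial by simp
    then show False
      using sigma2_ne_1 \<sigma>2 2 by simp
  qed
qed

lemma sigma2_ne_sigma1_squared: "\<sigma> 2 \<noteq> (\<sigma> 1)\<^sup>2"
proof
  assume \<sigma>2: "\<sigma> 2 = (\<sigma> 1)\<^sup>2"
  have "(1 - \<sigma> 1) * (1 + (1 + real (a 1)) * \<sigma> 1) = 0"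
    using sigma_rec(1) \<sigma>2 valency_real(1) by algebra
  then have \<sigma>1: "(1 + real (a 1)) * \<sigma> 1 = -1"
    using sigma_nontrivial by algebra
  have "(1 - \<sigma> 1) * (1 + \<sigma> 1 + a 1 * \<sigma> 1 * \<rho> 1) = 0"
    using rho_rec(1) prod_rec(1) \<sigma>2 by algebra
  then have "a 1 * \<sigma> 1 * (\<rho> 1 - 1) = 0"
    using sigma_nontrivial \<sigma>1 by algebra
  then show False
    using a1_pos \<sigma>1 rho_nontrivial by auto
qed

end

theorem lemma12p4:
  fixes V :: "'v set" and E :: "'v \<Rightarrow> 'v \<Rightarrow> bool"
    and D :: nat and a b c :: "nat \<Rightarrow> nat"
    and \<sigma> :: "nat \<Rightarrow> real" and \<epsilon> :: real
  assumes "distance_regular V E D a b c"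
    and "D \<ge> 3"
    and "a 1 \<noteq> 0"
    and "pseudo_cosine D a b c \<sigma>"
    and "nontrivial_pcs \<sigma>"
    and "tight_with_aux D a b c \<sigma> \<epsilon>"
  shows "\<sigma> 2 \<noteq> 1 \<and> \<epsilon> * \<sigma> 1 \<noteq> 1 \<and> \<sigma> 2 \<noteq> \<epsilon> * \<sigma> 1 \<and> \<sigma> 2 \<noteq> (\<sigma> 1)\<^sup>2"
proof -
  interpret distance_regular_graph V E D a b c
    using assms(1) by unfold_locales
  obtain \<rho> where "nontrivial_pcs \<rho>" and "tight_pair D a b c \<sigma> \<rho>"
    and "auxiliary_parameter D \<sigma> \<rho> \<epsilon>"
    using assms(6) unfolding tight_with_aux_def by blast
  then interpret tight_pair_setting D a b c \<sigma> \<rho> \<epsilon>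
    using assms(2,3,5) c0 a0 c1 valency[of 1] valency[of 2] b_pos[of 1] b_pos[of 2] a2_pos
    by unfold_locales (auto simp: nontrivial_pcs_def)
  show ?thesis
    using sigma2_ne_1 aux_sigma1_ne_1 sigma2_ne_aux_sigma1 sigma2_ne_sigma1_squared by blast
qed

end
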